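(* Let $\mathcal{G}$ be a finite simple undirected graph with vertex set $\mathcal{N}=\{1,2,\ldots,N\}$, $N\ge 1$, and let $\boldsymbol{\mathcal{A}}$ denote the collection of all independent sets of vertices of $\mathcal{G}$ (including the empty set $\Phi$). For $i\in\mathcal{N}$ let $\mathcal{N}_i$ be the set of neighbours of $i$ in $\mathcal{G}$. For each $\mathcal{A}\in\boldsymbol{\mathcal{A}}$ let $\mathcal{B}_{\mathcal{A}}=\{j\in\mathcal{N}\setminus\mathcal{A} : \mathcal{N}_j\cap\mathcal{A}\neq\emptyset\}$ and $\mathcal{U}_{\mathcal{A}}=\mathcal{N}\setminus(\mathcal{A}\cup\mathcal{B}_{\mathcal{A}})$. Given parameters $\rho_i>0$, $i\in\mathcal{N}$, define the probability distribution on $\boldsymbol{\mathcal{A}}$ $$\pi(\mathcal{A})=\frac{\prod_{i\in\mathcal{A}}\rho_i}{\sum_{\mathcal{A}'\in\boldsymbol{\mathcal{A}}}\prod_{j\in\mathcal{A}'}\rho_j}$$ (an empty product equals $1$), and for each $i\in\mathcal{N}$ let $$x_i(\mathcal{G})=\sum_{\mathcal{A}\in\boldsymbol{\mathcal{A}}\,:\, i\in\mathcal{A}\cup\mathcal{U}_{\mathcal{A}}}\pi(\mathcal{A}),\qquad \bar{\Theta}(\mathcal{G})=\sum_{i=1}^N x_i(\mathcal{G}).$$ Let $\alpha(\mathcal{G})$ be the independence number of $\mathcal{G}$ (the cardinality of a maximum independent set). Then, taking $\rho_i=\rho$ for all $i\in\mathcal{N}$ and letting $\rho\to\infty$, we have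 $\bar{\Theta}(\mathcal{G})\to\alpha(\mathcal{G})$.
   Context: In the paper's model, vertices of $\mathcal{G}$ are co-channel WLAN cells, edges join cells that mutually block each other by carrier sensing, $\pi$ is the stationary distribution of the set of cells transmitting, $\rho_i$ is the "access intensity" of cell $i$, $x_i(\mathcal{G})$ is the fraction of time cell $i$ is not blocked (its normalized throughput), and $\bar{\Theta}(\mathcal{G})$ is the normalized network throughput. A maximum independent set is an independent set of largest cardinality. *)

theory Defs
  imports Complex_Main
begin

definition simple_graph :: "nat \<Rightarrow> (nat \<Rightarrow> nat \<Rightarrow> bool) \<Rightarrow> bool" where
  "simple_graph N E \<longleftrightarrow> (\<forall>i j. E i j \<longrightarrow> i \<in> {1..N} \<and> j \<in> {1..N}) \<and>
     (\<forall>i j. E i j \<longrightarrow> E j i) \<and> (\<forall>i. \<not> E i i)"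

definition neighbours :: "nat \<Rightarrow> (nat \<Rightarrow> nat \<Rightarrow> bool) \<Rightarrow> nat \<Rightarrow> nat set" where
  "neighbours N E i = {j \<in> {1..N}. E i j}"

definition indep_set :: "nat \<Rightarrow> (nat \<Rightarrow> nat \<Rightarrow> bool) \<Rightarrow> nat set \<Rightarrow> bool" where
  "indep_set N E A \<longleftrightarrow> A \<subseteq> {1..N} \<and> (\<forall>i\<in>A. \<forall>j\<in>A. \<not> E i j)"

definition indep_sets :: "nat \<Rightarrow> (nat \<Rightarrow> nat \<Rightarrow> bool) \<Rightarrow> nat set set" where
  "indep_sets N E = {A. indep_set N E A}"

definition blocked :: "nat \<Rightarrow> (nat \<Rightarrow> nat \<Rightarrow> bool) \<Rightarrow> nat set \<Rightarrow> nat set" where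
  "blocked N E A = {j \<in> {1..N} - A. neighbours N E j \<inter> A \<noteq> {}}"

definition unblocked :: "nat \<Rightarrow> (nat \<Rightarrow> nat \<Rightarrow> bool) \<Rightarrow> nat set \<Rightarrow> nat set" where
  "unblocked N E A = {1..N} - (A \<union> blocked N E A)"

definition stat_dist :: "nat \<Rightarrow> (nat \<Rightarrow> nat \<Rightarrow> bool) \<Rightarrow> (nat \<Rightarrow> real) \<Rightarrow> nat set \<Rightarrow> real" where
  "stat_dist N E \<rho> A = (\<Prod>i\<in>A. \<rho> i) / (\<Sum>A'\<in>indep_sets N E. \<Prod>j\<in>A'. \<rho> j)"

definition norm_thr :: "nat \<Rightarrow> (nat \<Rightarrow> nat \<Rightarrow> bool) \<Rightarrow> (nat \<Rightarrow> real) \<Rightarrow> nat \<Rightarrow> real" where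
  "norm_thr N E \<rho> i = (\<Sum>A\<in>{A \<in> indep_sets N E. i \<in> A \<union> unblocked N E A}. stat_dist N E \<rho> A)"

definition net_thr :: "nat \<Rightarrow> (nat \<Rightarrow> nat \<Rightarrow> bool) \<Rightarrow> (nat \<Rightarrow> real) \<Rightarrow> real" where
  "net_thr N E \<rho> = (\<Sum>i=1..N. norm_thr N E \<rho> i)"

definition indep_number :: "nat \<Rightarrow> (nat \<Rightarrow> nat \<Rightarrow> bool) \<Rightarrow> nat" where
  "indep_number N E = Max (card ` indep_sets N E)"

end

theory Submission
  imports Defs
begin

text \<open>With \<open>\<rho>\<^sub>i = \<rho>\<close> the network throughput is the \<open>\<rho>\<^bsup>|A|\<^esup>\<close>-weighted average of
  \<open>|A \<union> U\<^sub>A|\<close> over the independent sets \<open>A\<close>. As \<open>\<rho> \<rightarrow> \<infinity>\<close> all weight concentrates on the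
  maximum independent sets, and a maximum independent set leaves no vertex unblocked
  (otherwise it could be enlarged), so on these sets \<open>|A \<union> U\<^sub>A| = |A| = \<alpha>(\<G>)\<close>.\<close>

lemma power_div_power_tendsto:
  assumes "k \<le> n"
  shows "((\<lambda>\<rho>::real. \<rho> ^ k / \<rho> ^ n) \<longlongrightarrow> (if k = n then 1 else 0)) at_top"
proof -
  have "((\<lambda>\<rho>::real. inverse \<rho> ^ (n - k)) \<longlongrightarrow> 0 ^ (n - k)) at_top"
    by (intro tendsto_power tendsto_inverse_0_at_top filterlim_ident)
  moreover have "eventually (\<lambda>\<rho>::real. inverse \<rho> ^ (n - k) = \<rho> ^ k / \<rho> ^ n) at_top"
    using eventually_gt_at_top[of 0]
    by eventually_elim (simp add: power_diff assms power_inverse divide_inverse)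
  ultimately have "((\<lambda>\<rho>::real. \<rho> ^ k / \<rho> ^ n) \<longlongrightarrow> 0 ^ (n - k)) at_top"
    by (rule Lim_transform_eventually)
  moreover have "(0::real) ^ (n - k) = (if k = n then 1 else 0)"
    using assms by simp
  ultimately show ?thesis by (simp only:)
qed

lemma tendsto_dominant_power_average:
  fixes S :: "'a set" and k :: "'a \<Rightarrow> nat" and w :: "'a \<Rightarrow> real"
  assumes "finite S" and le: "\<And>A. A \<in> S \<Longrightarrow> k A \<le> n" and attained: "A\<^sub>0 \<in> S" "k A\<^sub>0 = n"
    and top: "\<And>A. A \<in> S \<Longrightarrow> k A = n \<Longrightarrow> w A = c"
  shows "((\<lambda>\<rho>::real. (\<Sum>A\<in>S. \<rho> ^ k A * w A) / (\<Sum>A\<in>S. \<rho> ^ k A)) \<longlongrightarrow> c) at_top"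
proof -
  define h where "h A = (if k A = n then 1 else 0 :: real)" for A
  define m where "m = (\<Sum>A\<in>S. h A)"
  have lim: "((\<lambda>\<rho>::real. \<rho> ^ k A / \<rho> ^ n) \<longlongrightarrow> h A) at_top" if "A \<in> S" for A
    unfolding h_def using le[OF that] by (rule power_div_power_tendsto)
  have "m \<ge> h A\<^sub>0"
    unfolding m_def using assms(1) attained by (intro member_le_sum) (auto simp: h_def)
  hence m_nz: "m \<noteq> 0" using attained by (simp add: h_def)
  have num_limit: "(\<Sum>A\<in>S. h A * w A) = c * m"
    unfolding m_def sum_distrib_left using top by (intro sum.cong) (auto simp: h_def)
  have "((\<lambda>\<rho>::real. \<Sum>A\<in>S. \<rho> ^ k A / \<rho> ^ n * w A) \<longlongrightarrow> c * m) at_top"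
    unfolding num_limit[symmetric] by (intro tendsto_sum tendsto_mult lim tendsto_const)
  moreover have "((\<lambda>\<rho>::real. \<Sum>A\<in>S. \<rho> ^ k A / \<rho> ^ n) \<longlongrightarrow> m) at_top"
    unfolding m_def by (intro tendsto_sum lim)
  ultimately have "((\<lambda>\<rho>::real. (\<Sum>A\<in>S. \<rho> ^ k A / \<rho> ^ n * w A) / (\<Sum>A\<in>S. \<rho> ^ k A / \<rho> ^ n))
          \<longlongrightarrow> c * m / m) at_top"
    using m_nz by (rule tendsto_divide)
  moreover have "eventually (\<lambda>\<rho>::real.
      (\<Sum>A\<in>S. \<rho> ^ k A / \<rho> ^ n * w A) / (\<Sum>A\<in>S. \<rho> ^ k A / \<rho> ^ n)
      = (\<Sum>A\<in>S. \<rho> ^ k A * w A) / (\<Sum>A\<in>S. \<rho> ^ k A)) at_top"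
    using eventually_gt_at_top[of 0]
  proof eventually_elim
    case (elim \<rho>)
    have "(\<Sum>A\<in>S. \<rho> ^ k A / \<rho> ^ n * w A) = (\<Sum>A\<in>S. \<rho> ^ k A * w A) / \<rho> ^ n"
      by (simp add: sum_divide_distrib)
    moreover have "(\<Sum>A\<in>S. \<rho> ^ k A / \<rho> ^ n) = (\<Sum>A\<in>S. \<rho> ^ k A) / \<rho> ^ n"
      by (simp add: sum_divide_distrib)
    ultimately show ?case using elim by simp
  qed
  ultimately have "((\<lambda>\<rho>::real. (\<Sum>A\<in>S. \<rho> ^ k A * w A) / (\<Sum>A\<in>S. \<rho> ^ k A)) \<longlongrightarrow> c * m / m) at_top"
    by (rule Lim_transform_eventually)
  thus ?thesis using m_nz by simp
qed

lemma finite_indep_sets: "finite (indep_sets N E)"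
  by (rule finite_subset[of _ "Pow {1..N}"]) (auto simp: indep_sets_def indep_set_def)

lemma card_le_indep_number: "A \<in> indep_sets N E \<Longrightarrow> card A \<le> indep_number N E"
  unfolding indep_number_def using finite_indep_sets by (intro Max_ge) auto

lemma indep_number_attained: "\<exists>A\<in>indep_sets N E. card A = indep_number N E"
proof -
  have "{} \<in> indep_sets N E" by (simp add: indep_sets_def indep_set_def)
  hence "indep_number N E \<in> card ` indep_sets N E"
    unfolding indep_number_def using finite_indep_sets by (intro Max_in) auto
  thus ?thesis by auto
qed

lemma unblocked_maximum_indep_set:
  assumes g: "simple_graph N E" and A: "A \<in> indep_sets N E" and max: "card A = indep_number N E"
  shows "unblocked N E A = {}"
proof (rule ccontr)
  assume "unblocked N E A \<noteq> {}"
  then obtain j where "j \<in> unblocked N E A" by blast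
  hence j: "j \<in> {1..N}" "j \<notin> A" and no_nb: "neighbours N E j \<inter> A = {}"
    by (auto simp: unblocked_def blocked_def)
  have AN: "A \<subseteq> {1..N}" and "\<forall>i\<in>A. \<forall>k\<in>A. \<not> E i k"
    using A by (auto simp: indep_sets_def indep_set_def)
  moreover have "\<not> E j k \<and> \<not> E k j" if "k \<in> A" for k
    using that no_nb AN g unfolding neighbours_def simple_graph_def by blast
  moreover have "\<not> E j j" using g unfolding simple_graph_def by blast
  ultimately have "insert j A \<in> indep_sets N E"
    using j by (auto simp: indep_sets_def indep_set_def)
  hence "card (insert j A) \<le> card A"
    using max by (simp add: card_le_indep_number)
  moreover have "finite A" using AN finite_subset by blast
  ultimately show False using j by simp
qed

lemma stat_dist_uniform:
  "stat_dist N E (\<lambda>_. \<rho>) A = \<rho> ^ card A / (\<Sum>A'\<in>indep_sets N E. \<rho> ^ card A')"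
  unfolding stat_dist_def by simp

lemma net_thr_uniform:
  "net_thr N E (\<lambda>_. \<rho>) =
     (\<Sum>A\<in>indep_sets N E. \<rho> ^ card A * real (card (A \<union> unblocked N E A)))
     / (\<Sum>A\<in>indep_sets N E. \<rho> ^ card A)"
proof -
  let ?S = "indep_sets N E"
  let ?X = "\<lambda>A. A \<union> unblocked N E A"
  let ?\<pi> = "\<lambda>A. \<rho> ^ card A / (\<Sum>A\<in>?S. \<rho> ^ card A)"
  have X_sub: "?X A \<subseteq> {1..N}" if "A \<in> ?S" for A
    using that by (auto simp: unblocked_def indep_sets_def indep_set_def)
  have "net_thr N E (\<lambda>_. \<rho>) = (\<Sum>i=1..N. \<Sum>A\<in>?S. if i \<in> ?X A then ?\<pi> A else 0)"
    unfolding net_thr_def norm_thr_def stat_dist_uniform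
    by (rule sum.cong[OF refl], subst sum.inter_filter[OF finite_indep_sets]) simp
  also have "\<dots> = (\<Sum>A\<in>?S. \<Sum>i=1..N. if i \<in> ?X A then ?\<pi> A else 0)"
    by (rule sum.swap)
  also have "\<dots> = (\<Sum>A\<in>?S. real (card (?X A)) * ?\<pi> A)"
  proof (intro sum.cong refl)
    fix A assume "A \<in> ?S"
    hence "{i \<in> {1..N}. i \<in> ?X A} = ?X A" using X_sub by blast
    thus "(\<Sum>i=1..N. if i \<in> ?X A then ?\<pi> A else 0) = real (card (?X A)) * ?\<pi> A"
      by (subst sum.inter_filter[symmetric]) auto
  qed
  also have "\<dots> = (\<Sum>A\<in>?S. \<rho> ^ card A * real (card (?X A))) / (\<Sum>A\<in>?S. \<rho> ^ card A)"
    by (simp add: sum_divide_distrib mult_ac)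
  finally show ?thesis .
qed

theorem theorem1:
  fixes N :: nat and E :: "nat \<Rightarrow> nat \<Rightarrow> bool"
  assumes "N \<ge> 1" and "simple_graph N E"
  shows "((\<lambda>\<rho>::real. net_thr N E (\<lambda>_. \<rho>)) \<longlongrightarrow> real (indep_number N E)) at_top"
proof -
  obtain A\<^sub>0 where "A\<^sub>0 \<in> indep_sets N E" "card A\<^sub>0 = indep_number N E"
    using indep_number_attained by blast
  moreover have "real (card (A \<union> unblocked N E A)) = real (indep_number N E)"
    if "A \<in> indep_sets N E" "card A = indep_number N E" for A
    using that unblocked_maximum_indep_set[OF assms(2)] by simp
  ultimately show ?thesis
    unfolding net_thr_uniform
    by (intro tendsto_dominant_power_average finite_indep_sets) (auto intro: card_le_indep_number)
qed

end
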